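(* Let $D=(V,A,w)$ be a weighted digraph and let $M$ be a matching in $D$ (a set of arcs no two of which share an endpoint). Then $\mathrm{mac}(D)\ge\frac{w(D)}{4}+\frac{w(M)}{4}$.
   Context: A weighted digraph $D=(V,A,w)$ is a digraph without loops or parallel arcs (opposite arcs allowed) with weights $w:A\to\mathbb{R}_{\ge0}$; $w(\cdot)$ of an arc set is its total weight. For a partition $(X,Y)$ of $V$, $w(X,Y)$ is the total weight of arcs from $X$ to $Y$, and $\mathrm{mac}(D)=\max_{(X,Y)}w(X,Y)$. *)

theory Defs
  imports Complex_Main
begin

text \<open>A weighted digraph: finite vertex set V, arc set A of ordered pairs (so no parallel
arcs; opposite arcs allowed), no loops, nonnegative real weights on arcs.\<close>

definition weighted_digraph :: "'a set \<Rightarrow> ('a \<times> 'a) set \<Rightarrow> ('a \<times> 'a \<Rightarrow> real) \<Rightarrow> bool" where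
  "weighted_digraph V A w \<longleftrightarrow> finite V \<and> A \<subseteq> V \<times> V \<and> (\<forall>v. (v, v) \<notin> A)
     \<and> (\<forall>a\<in>A. w a \<ge> 0)"

definition wt :: "('a \<times> 'a \<Rightarrow> real) \<Rightarrow> ('a \<times> 'a) set \<Rightarrow> real" where
  "wt w B = (\<Sum>a\<in>B. w a)"

definition cut_weight :: "('a \<times> 'a) set \<Rightarrow> ('a \<times> 'a \<Rightarrow> real) \<Rightarrow> 'a set \<Rightarrow> 'a set \<Rightarrow> real" where
  "cut_weight A w X Y = wt w {(u, v) \<in> A. u \<in> X \<and> v \<in> Y}"

definition mac :: "'a set \<Rightarrow> ('a \<times> 'a) set \<Rightarrow> ('a \<times> 'a \<Rightarrow> real) \<Rightarrow> real" where
  "mac V A w = Max ((\<lambda>X. cut_weight A w X (V - X)) ` Pow V)"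

definition is_matching :: "('a \<times> 'a) set \<Rightarrow> ('a \<times> 'a) set \<Rightarrow> bool" where
  "is_matching A M \<longleftrightarrow> M \<subseteq> A \<and>
     (\<forall>a\<in>M. \<forall>b\<in>M. a \<noteq> b \<longrightarrow> {fst a, snd a} \<inter> {fst b, snd b} = {})"

end

theory Submission
  imports Defs
begin

text \<open>Let \<open>H\<close> be the set of heads of the arcs of \<open>M\<close>, and send every vertex of \<open>H\<close> to the tail
  of its matching arc and every other vertex to itself. For a uniformly random set \<open>Z\<close> of
  non-heads put a non-head \<open>v\<close> into \<open>X\<close> iff \<open>v \<in> Z\<close>, and a head into \<open>X\<close> iff its tail is not
  in \<open>Z\<close>. Distinct vertices then have independent memberships in \<open>X\<close> unless they are the
  two ends of a matching arc, whose memberships are complementary. So every arc lies in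
  the cut \<open>(X, V - X)\<close> with probability at least \<open>1/4\<close>, and every matching arc, with its
  tail in \<open>X\<close> exactly when its head is not, with probability \<open>1/2\<close>. The expected cut weight
  is therefore at least \<open>w(D)/4 + w(M)/4\<close>.\<close>

lemma card_Pow_with_trace:
  assumes "finite W" "T \<subseteq> W" "S \<subseteq> T"
  shows "2 ^ card T * card {Z \<in> Pow W. Z \<inter> T = S} = 2 ^ card W"
proof -
  have "{Z \<in> Pow W. Z \<inter> T = S} = (\<lambda>Z. Z \<union> S) ` Pow (W - T)"
  proof (intro equalityI subsetI)
    fix Z assume "Z \<in> {Z \<in> Pow W. Z \<inter> T = S}"
    then have "Z = (Z - T) \<union> S" "Z - T \<in> Pow (W - T)" by auto
    then show "Z \<in> (\<lambda>Z. Z \<union> S) ` Pow (W - T)" by blast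
  qed (use assms in auto)
  moreover have "inj_on (\<lambda>Z. Z \<union> S) (Pow (W - T))"
    using assms(3) by (auto intro!: inj_onI)
  ultimately have "card {Z \<in> Pow W. Z \<inter> T = S} = 2 ^ (card W - card T)"
    using assms by (simp add: card_image card_Pow card_Diff_subset finite_subset)
  moreover have "card T \<le> card W"
    using assms by (simp add: card_mono)
  ultimately show ?thesis
    by (simp flip: power_add)
qed

text \<open>\<open>switch_set V key s Z\<close> is the set \<open>X\<close> of the proof idea, for a general labelling
  \<open>key\<close> and flip predicate \<open>s\<close>.\<close>

definition switch_set :: "'a set \<Rightarrow> ('a \<Rightarrow> 'b) \<Rightarrow> ('a \<Rightarrow> bool) \<Rightarrow> 'b set \<Rightarrow> 'a set" where
  "switch_set V key s Z = {v \<in> V. (key v \<in> Z) \<noteq> s v}"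

lemma card_switch_set_separating:
  assumes "finite W" "key x \<in> W" "key y \<in> W" "x \<in> V" "y \<in> V"
    and "(key x, s x) \<noteq> (key y, s y)"
  defines "C \<equiv> {Z \<in> Pow W. x \<in> switch_set V key s Z \<and> y \<notin> switch_set V key s Z}"
  shows "2 ^ card W \<le> 4 * card C"
    and "key x = key y \<Longrightarrow> 2 ^ card W = 2 * card C"
proof -
  define T where "T = {key x, key y}"
  define S where "S = {v \<in> T. (v = key x \<and> \<not> s x) \<or> (v = key y \<and> s y)}"
  have "key x \<in> S \<longleftrightarrow> \<not> s x" "key y \<in> S \<longleftrightarrow> s y"
    using assms(6) unfolding S_def T_def by auto
  moreover have "Z \<inter> T = S \<longleftrightarrow> (key x \<in> Z \<longleftrightarrow> key x \<in> S) \<and> (key y \<in> Z \<longleftrightarrow> key y \<in> S)" for Z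
    unfolding S_def T_def by blast
  ultimately have "C = {Z \<in> Pow W. Z \<inter> T = S}"
    using assms(4,5) unfolding C_def switch_set_def by auto
  moreover have "T \<subseteq> W" "S \<subseteq> T"
    using assms(2,3) unfolding T_def S_def by auto
  ultimately have count: "2 ^ card T * card C = 2 ^ card W"
    using card_Pow_with_trace[OF assms(1)] by simp
  have "card T \<le> 2"
    unfolding T_def by (simp add: card_insert_if)
  then have "2 ^ card T \<le> (4::nat)"
    using power_increasing[of "card T" 2 "2::nat"] by simp
  then show "2 ^ card W \<le> 4 * card C"
    using count by (metis mult_le_mono1)
  show "2 ^ card W = 2 * card C" if "key x = key y"
    using count that unfolding T_def by simp
qed

lemma cut_weight_eq_sum_if:
  assumes "finite A"
  shows "cut_weight A w X Y = (\<Sum>a\<in>A. if fst a \<in> X \<and> snd a \<in> Y then w a else 0)"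
proof -
  have "{(u, v) \<in> A. u \<in> X \<and> v \<in> Y} = {a \<in> A. fst a \<in> X \<and> snd a \<in> Y}"
    by auto
  then show ?thesis
    unfolding cut_weight_def wt_def using sum.inter_filter[OF assms] by simp
qed

lemma sum_cut_weight_eq:
  assumes "finite A" "finite I"
  shows "(\<Sum>i\<in>I. cut_weight A w (X i) (Y i))
       = (\<Sum>a\<in>A. w a * card {i \<in> I. fst a \<in> X i \<and> snd a \<in> Y i})"
proof -
  have "(\<Sum>i\<in>I. cut_weight A w (X i) (Y i))
      = (\<Sum>a\<in>A. \<Sum>i\<in>I. if fst a \<in> X i \<and> snd a \<in> Y i then w a else 0)"
    unfolding cut_weight_eq_sum_if[OF assms(1)] by (rule sum.swap)
  also have "\<dots> = (\<Sum>a\<in>A. w a * card {i \<in> I. fst a \<in> X i \<and> snd a \<in> Y i})"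
    by (simp add: sum.inter_filter[OF assms(2), symmetric] mult.commute)
  finally show ?thesis .
qed

lemma cut_weight_le_mac:
  assumes "finite V" "X \<subseteq> V"
  shows "cut_weight A w X (V - X) \<le> mac V A w"
  unfolding mac_def using assms by (intro Max_ge) auto

lemma sum_weighted_counts_ge:
  assumes "finite A" "M \<subseteq> A"
    and "\<And>a. a \<in> A \<Longrightarrow> N \<le> 4 * c a" "\<And>a. a \<in> M \<Longrightarrow> N \<le> 2 * c a"
    and "\<And>a. a \<in> A \<Longrightarrow> w a \<ge> 0"
  shows "N * (wt w A / 4 + wt w M / 4) \<le> (\<Sum>a\<in>A. w a * c a)"
proof -
  have "(\<Sum>a\<in>A. w a * N / 4 + (if a \<in> M then w a * N / 4 else 0)) \<le> (\<Sum>a\<in>A. w a * c a)"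
  proof (rule sum_mono)
    fix a assume "a \<in> A"
    then have "w a * N \<le> w a * (4 * c a)" and "a \<in> M \<Longrightarrow> w a * N \<le> w a * (2 * c a)"
      using assms(3-5) mult_left_mono by blast+
    then show "w a * N / 4 + (if a \<in> M then w a * N / 4 else 0) \<le> w a * c a"
      by (simp add: algebra_simps)
  qed
  moreover have "(\<Sum>a\<in>A. if a \<in> M then w a * N / 4 else 0) = (\<Sum>a\<in>M. w a * N / 4)"
    using assms(1,2) by (simp add: sum.inter_filter[symmetric] Int_absorb1 flip: Int_def)
  moreover have "(\<Sum>a\<in>B. w a * N / 4) = N * wt w B / 4" for B
    unfolding wt_def by (simp add: sum_distrib_left sum_divide_distrib mult.commute)
  ultimately show ?thesis
    unfolding sum.distrib by (simp add: distrib_left)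
qed

lemma matching_arcs_eqI:
  assumes "is_matching A M" "a \<in> M" "b \<in> M" "v \<in> {fst a, snd a}" "v \<in> {fst b, snd b}"
  shows "a = b"
proof (rule ccontr)
  assume "a \<noteq> b"
  then have "{fst a, snd a} \<inter> {fst b, snd b} = {}"
    using assms(1-3) unfolding is_matching_def by blast
  with assms(4,5) show False
    by blast
qed

definition matching_tail :: "('a \<times> 'a) set \<Rightarrow> 'a \<Rightarrow> 'a" where
  "matching_tail M v = (if v \<in> snd ` M then THE u. (u, v) \<in> M else v)"

lemma matching_tail_eq:
  assumes "is_matching A M" "(u, v) \<in> M"
  shows "matching_tail M v = u"
proof -
  have "(THE u. (u, v) \<in> M) = u"
  proof (rule the_equality)
    show "u' = u" if "(u', v) \<in> M" for u'
      using matching_arcs_eqI[OF assms(1) that assms(2), of v] by simp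
  qed (fact assms(2))
  moreover have "v \<in> snd ` M"
    using assms(2) by (rule rev_image_eqI) simp
  ultimately show ?thesis
    unfolding matching_tail_def by simp
qed

lemma matching_tail_notin_heads:
  assumes "is_matching A M" "\<And>v. (v, v) \<notin> A"
  shows "matching_tail M v \<notin> snd ` M"
proof
  assume head: "matching_tail M v \<in> snd ` M"
  show False
  proof (cases "v \<in> snd ` M")
    case True
    then obtain u where uv: "(u, v) \<in> M" by force
    from head obtain t where tu: "(t, u) \<in> M"
      using matching_tail_eq[OF assms(1) uv] by force
    have "(t, u) = (u, v)"
      using matching_arcs_eqI[OF assms(1) tu uv, of u] by simp
    then show False
      using uv assms unfolding is_matching_def by auto
  next
    case False
    then show False
      using head unfolding matching_tail_def by simp
  qed
qed

lemma inj_matching_tail_head: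
  assumes "is_matching A M"
  shows "inj (\<lambda>v. (matching_tail M v, v \<in> snd ` M))"
proof (rule injI)
  fix x y assume eq: "(matching_tail M x, x \<in> snd ` M) = (matching_tail M y, y \<in> snd ` M)"
  show "x = y"
  proof (cases "x \<in> snd ` M")
    case True
    then obtain u u' where "(u, x) \<in> M" "(u', y) \<in> M"
      using eq by force
    moreover from this have "u = u'"
      using eq matching_tail_eq[OF assms] by auto
    ultimately show ?thesis
      using matching_arcs_eqI[OF assms, of "(u, x)" "(u', y)" u] by simp
  next
    case False
    then show ?thesis
      using eq unfolding matching_tail_def by auto
  qed
qed

lemma matching_tail_mem:
  assumes "is_matching A M" "A \<subseteq> V \<times> V" "\<And>v. (v, v) \<notin> A" "v \<in> V"
  shows "matching_tail M v \<in> V - snd ` M"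
proof -
  have "matching_tail M v \<in> V"
  proof (cases "v \<in> snd ` M")
    case True
    then obtain u where "(u, v) \<in> M" by force
    then show ?thesis
      using matching_tail_eq[OF assms(1)] assms(1,2) unfolding is_matching_def by auto
  qed (use assms(4) in \<open>simp add: matching_tail_def\<close>)
  then show ?thesis
    using matching_tail_notin_heads[OF assms(1,3)] by blast
qed

definition matching_switch_set :: "'a set \<Rightarrow> ('a \<times> 'a) set \<Rightarrow> 'a set \<Rightarrow> 'a set" where
  "matching_switch_set V M = switch_set V (matching_tail M) (\<lambda>v. v \<in> snd ` M)"

lemma card_matching_switch_set_cuts:
  assumes "is_matching A M" "finite V" "A \<subseteq> V \<times> V" "\<And>v. (v, v) \<notin> A" "(x, y) \<in> A"
  defines "C \<equiv> {Z \<in> Pow (V - snd ` M).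
      x \<in> matching_switch_set V M Z \<and> y \<in> V - matching_switch_set V M Z}"
  shows "2 ^ card (V - snd ` M) \<le> 4 * card C"
    and "(x, y) \<in> M \<Longrightarrow> 2 ^ card (V - snd ` M) = 2 * card C"
proof -
  have xy: "x \<in> V" "y \<in> V" "x \<noteq> y"
    using assms(3-5) by auto
  have "(matching_tail M x, x \<in> snd ` M) \<noteq> (matching_tail M y, y \<in> snd ` M)"
    using xy(3) inj_matching_tail_head[OF assms(1)] unfolding inj_def by blast
  note count = card_switch_set_separating[OF _ matching_tail_mem[OF assms(1,3,4) xy(1)]
      matching_tail_mem[OF assms(1,3,4) xy(2)] xy(1,2) this, folded matching_switch_set_def]
  have C_eq: "C = {Z \<in> Pow (V - snd ` M).
      x \<in> matching_switch_set V M Z \<and> y \<notin> matching_switch_set V M Z}"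
    unfolding C_def using xy(2) by blast
  show "2 ^ card (V - snd ` M) \<le> 4 * card C"
    unfolding C_eq using count(1) assms(2) by simp
  assume "(x, y) \<in> M"
  then have "matching_tail M y = x"
    by (rule matching_tail_eq[OF assms(1)])
  moreover from this have "matching_tail M x = x"
    using matching_tail_notin_heads[OF assms(1,4), of y] unfolding matching_tail_def by simp
  ultimately show "2 ^ card (V - snd ` M) = 2 * card C"
    unfolding C_eq using count(2) assms(2) by simp
qed

theorem mainTheorem5:
  fixes V :: "'a set" and A M :: "('a \<times> 'a) set" and w :: "'a \<times> 'a \<Rightarrow> real"
  assumes "weighted_digraph V A w"
    and "is_matching A M"
  shows "mac V A w \<ge> wt w A / 4 + wt w M / 4"
proof -
  have finV: "finite V" and AV: "A \<subseteq> V \<times> V" and loopless: "\<And>v. (v, v) \<notin> A"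
    and w_nonneg: "\<And>a. a \<in> A \<Longrightarrow> w a \<ge> 0" and MA: "M \<subseteq> A"
    using assms unfolding weighted_digraph_def is_matching_def by auto
  have finA: "finite A"
    using AV finV finite_subset by blast
  define W where "W = V - snd ` M"
  define X where "X = matching_switch_set V M"
  define N :: real where "N = 2 ^ card W"
  define k where "k a = card {Z \<in> Pow W. fst a \<in> X Z \<and> snd a \<in> V - X Z}" for a
  note counts = card_matching_switch_set_cuts[OF assms(2) finV AV loopless, folded W_def X_def]
  have "2 ^ card W \<le> 4 * k a" if "a \<in> A" for a
    using counts(1)[of "fst a" "snd a"] that unfolding k_def by simp
  then have "N \<le> 4 * real (k a)" if "a \<in> A" for a
    using that unfolding N_def by (metis of_nat_le_iff of_nat_mult of_nat_numeral of_nat_power)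
  moreover have "2 ^ card W = 2 * k a" if "a \<in> M" for a
    using counts(2)[of "fst a" "snd a"] that subsetD[OF MA that] unfolding k_def by simp
  then have "N \<le> 2 * real (k a)" if "a \<in> M" for a
    using that unfolding N_def by (metis order_refl of_nat_mult of_nat_numeral of_nat_power)
  ultimately have "N * (wt w A / 4 + wt w M / 4) \<le> (\<Sum>a\<in>A. w a * real (k a))"
    by (rule sum_weighted_counts_ge[OF finA MA _ _ w_nonneg])
  also have "\<dots> = (\<Sum>Z\<in>Pow W. cut_weight A w (X Z) (V - X Z))"
    unfolding k_def using sum_cut_weight_eq[OF finA, of "Pow W" w X "\<lambda>Z. V - X Z"] finV W_def
    by simp
  also have "\<dots> \<le> (\<Sum>Z\<in>Pow W. mac V A w)"
    using cut_weight_le_mac[OF finV]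
    unfolding X_def matching_switch_set_def switch_set_def by (intro sum_mono) auto
  also have "\<dots> = N * mac V A w"
    using finV by (simp add: N_def W_def card_Pow)
  finally show ?thesis
    unfolding N_def by simp
qed

end
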